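(* Let $K\in\mathcal{B}(H)$ and let $\Lambda_{TU}=\{(F(x),\Lambda_x,v(x))\}_{x\in X}$ be a continuous $(T,U)$-controlled $K$-$g$-fusion frame for $H$ with (positive) frame operator $S_C$. Let $V\in\mathcal{B}(H)$ be invertible such that $V^*$ commutes with $T$ and with $U$. Then the following are equivalent: (i) $\Gamma_{TU}=\{(VF(x),\Lambda_xP_{F(x)}V^*,v(x))\}_{x\in X}$ is a continuous $(T,U)$-controlled $VK$-$g$-fusion frame for $H$, i.e. there exist $0<A'\le B'<\infty$ with $$A'\|(VK)^*f\|^2\le\int_X v(x)^2\langle\Lambda_xP_{F(x)}V^*P_{VF(x)}Uf,\;\Lambda_xP_{F(x)}V^*P_{VF(x)}Tf\rangle\,d\mu(x)\le B'\|f\|^2\quad(f\in H);$$ (ii) the quotient operator $[(VK)^*/S_C^{1/2}V^*]$ is bounded; (iii) the quotient operator $[(VK)^*/(VS_CV^* )^{1/2}]$ is bounded.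
   Context: $H$ is a separable complex Hilbert space, $\mathcal{B}(H)$ the bounded operators on $H$, $\mathcal{GB}^+(H)$ the positive bounded operators on $H$ with bounded inverse, $P_M$ the orthogonal projection onto a closed subspace $M$. Let $(X,\mu)$ be a measure space, $\{K_x\}_{x\in X}$ Hilbert spaces, $v:X\to\mathbb{R}^+$ measurable, $F$ a map from $X$ to closed subspaces of $H$ with $x\mapsto P_{F(x)}f$ weakly measurable for all $f$, $\Lambda_x\in\mathcal{B}(F(x),K_x)$, and $T,U\in\mathcal{GB}^+(H)$. For $L\in\mathcal{B}(H)$, the family is a continuous $(T,U)$-controlled $L$-$g$-fusion frame for $H$ if there exist $0<A\le B<\infty$ with $A\|L^*f\|^2\le\int_X v(x)^2\langle\Lambda_xP_{F(x)}Uf,\Lambda_xP_{F(x)}Tf\rangle d\mu(x)\le B\|f\|^2$ for all $f\in H$. Its frame operator $S_C\in\mathcal{B}(H)$ is given by $\langle S_Cf,g\rangle=\int_X v(x)^2\langle T^*P_{F(x)}\Lambda_x^*\Lambda_xP_{F(x)}Uf,g\rangle d\mu(x)$. For $A_1,A_2\in\mathcal{B}(H)$, the quotient operator $[A_1/A_2]$ is the map $A_2f\mapsto A_1f$ from $\mathcal{R}(A_2)$ to $\mathcal{R}(A_1)$; it is bounded if it is well defined and there is $C>0$ with $\|A_1f\|\le C\|A_2f\|$ for all $f\in H$. *)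

theory Defs
  imports "HOL-Analysis.Analysis"
begin

text \<open>A complex inner product space: a real normed vector space with a compatible
  complex scalar multiplication and a complex inner product, linear in the FIRST
  argument and conjugate-linear in the second, inducing the norm.\<close>

class complex_inner = real_normed_vector +
  fixes scaleC :: "complex \<Rightarrow> 'a \<Rightarrow> 'a"
    and cinner :: "'a \<Rightarrow> 'a \<Rightarrow> complex"
  assumes scaleC_add_right: "scaleC a (x + y) = scaleC a x + scaleC a y"
    and scaleC_add_left: "scaleC (a + b) x = scaleC a x + scaleC b x"
    and scaleC_scaleC: "scaleC a (scaleC b x) = scaleC (a * b) x"
    and scaleC_one: "scaleC 1 x = x"
    and scaleR_scaleC: "scaleR r x = scaleC (complex_of_real r) x"
    and cinner_add_left: "cinner (x + y) z = cinner x z + cinner y z"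
    and cinner_scaleC_left: "cinner (scaleC a x) y = a * cinner x y"
    and cinner_commute: "cinner x y = cnj (cinner y x)"
    and cinner_self_norm: "cinner x x = complex_of_real ((norm x)\<^sup>2)"

class chilbert_space = complex_inner + complete_space

definition clinear_op :: "('a::complex_inner \<Rightarrow> 'b::complex_inner) \<Rightarrow> bool" where
  "clinear_op A \<longleftrightarrow> (\<forall>x y. A (x + y) = A x + A y) \<and> (\<forall>c x. A (scaleC c x) = scaleC c (A x))"

definition bounded_op :: "('a::complex_inner \<Rightarrow> 'b::complex_inner) \<Rightarrow> bool" where
  "bounded_op A \<longleftrightarrow> clinear_op A \<and> (\<exists>C. \<forall>x. norm (A x) \<le> C * norm x)"

definition adj :: "('a::complex_inner \<Rightarrow> 'b::complex_inner) \<Rightarrow> 'b \<Rightarrow> 'a" where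
  "adj A = (THE B. \<forall>x y. cinner (A x) y = cinner x (B y))"

definition positive_op :: "('a::complex_inner \<Rightarrow> 'a) \<Rightarrow> bool" where
  "positive_op A \<longleftrightarrow> bounded_op A \<and>
     (\<forall>x. Im (cinner (A x) x) = 0 \<and> Re (cinner (A x) x) \<ge> 0)"

definition pos_invertible_op :: "('a::complex_inner \<Rightarrow> 'a) \<Rightarrow> bool" where
  "pos_invertible_op A \<longleftrightarrow> positive_op A \<and> bij A \<and> bounded_op (inv A)"

definition invertible_op :: "('a::complex_inner \<Rightarrow> 'a) \<Rightarrow> bool" where
  "invertible_op A \<longleftrightarrow> bounded_op A \<and> bij A \<and> bounded_op (inv A)"

definition op_sqrt :: "('a::complex_inner \<Rightarrow> 'a) \<Rightarrow> 'a \<Rightarrow> 'a" where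
  "op_sqrt A = (THE R. positive_op R \<and> R \<circ> R = A)"

definition closed_csubspace :: "'a::complex_inner set \<Rightarrow> bool" where
  "closed_csubspace M \<longleftrightarrow> closed M \<and> 0 \<in> M \<and> (\<forall>x\<in>M. \<forall>y\<in>M. x + y \<in> M)
     \<and> (\<forall>c. \<forall>x\<in>M. scaleC c x \<in> M)"

definition proj :: "'a::complex_inner set \<Rightarrow> 'a \<Rightarrow> 'a" where
  "proj M x = (THE y. y \<in> M \<and> (\<forall>m\<in>M. cinner (x - y) m = 0))"

text \<open>The quotient operator [A1/A2] : A2 f \<mapsto> A1 f is bounded: it is well defined
  and there is C > 0 with norm (A1 f) \<le> C * norm (A2 f) for all f.\<close>
definition quotient_op_bounded :: "('a \<Rightarrow> 'b::real_normed_vector) \<Rightarrow> ('a \<Rightarrow> 'c::real_normed_vector) \<Rightarrow> bool" where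
  "quotient_op_bounded A1 A2 \<longleftrightarrow>
     (\<forall>f g. A2 f = A2 g \<longrightarrow> A1 f = A1 g) \<and> (\<exists>C>0. \<forall>f. norm (A1 f) \<le> C * norm (A2 f))"

definition cgf_integrand ::
  "('x \<Rightarrow> real) \<Rightarrow> ('x \<Rightarrow> 'a::complex_inner set) \<Rightarrow> ('x \<Rightarrow> 'a \<Rightarrow> 'k::complex_inner)
   \<Rightarrow> ('a \<Rightarrow> 'a) \<Rightarrow> ('a \<Rightarrow> 'a) \<Rightarrow> 'a \<Rightarrow> 'x \<Rightarrow> complex" where
  "cgf_integrand v F \<Lambda> T U f x =
     complex_of_real ((v x)\<^sup>2) * cinner (\<Lambda> x (proj (F x) (U f))) (\<Lambda> x (proj (F x) (T f)))"

definition ctrl_L_gfusion_frame ::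
  "'x measure \<Rightarrow> ('x \<Rightarrow> real) \<Rightarrow> ('x \<Rightarrow> 'a::complex_inner set) \<Rightarrow> ('x \<Rightarrow> 'a \<Rightarrow> 'k::complex_inner)
   \<Rightarrow> ('a \<Rightarrow> 'a) \<Rightarrow> ('a \<Rightarrow> 'a) \<Rightarrow> ('a \<Rightarrow> 'a) \<Rightarrow> bool" where
  "ctrl_L_gfusion_frame M v F \<Lambda> T U L \<longleftrightarrow>
     (\<exists>A B. 0 < A \<and> A \<le> B \<and>
        (\<forall>f. integrable M (cgf_integrand v F \<Lambda> T U f) \<and>
             Im (integral\<^sup>L M (cgf_integrand v F \<Lambda> T U f)) = 0 \<and>
             A * (norm (adj L f))\<^sup>2 \<le> Re (integral\<^sup>L M (cgf_integrand v F \<Lambda> T U f)) \<and>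
             Re (integral\<^sup>L M (cgf_integrand v F \<Lambda> T U f)) \<le> B * (norm f)\<^sup>2))"

definition is_ctrl_frame_operator ::
  "'x measure \<Rightarrow> ('x \<Rightarrow> real) \<Rightarrow> ('x \<Rightarrow> 'a::complex_inner set) \<Rightarrow> ('x \<Rightarrow> 'a \<Rightarrow> 'k::complex_inner)
   \<Rightarrow> ('a \<Rightarrow> 'a) \<Rightarrow> ('a \<Rightarrow> 'a) \<Rightarrow> ('a \<Rightarrow> 'a) \<Rightarrow> bool" where
  "is_ctrl_frame_operator M v F \<Lambda> T U S \<longleftrightarrow> bounded_op S \<and>
     (\<forall>f g. cinner (S f) g =
        (LINT x|M. complex_of_real ((v x)\<^sup>2) *
           cinner (adj T (proj (F x) (adj (\<Lambda> x) (\<Lambda> x (proj (F x) (U f)))))) g))"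

end

theory Submission
  imports Defs
begin

text \<open>The frame operator S has the quadratic form \<open>\<langle>S g, g\<rangle> = \<integral> v\<^sup>2 \<langle>\<Lambda> P U g, \<Lambda> P T g\<rangle>\<close>,
  which is therefore \<open>\<parallel>S\<^sup>1\<^sup>/\<^sup>2 g\<parallel>\<^sup>2\<close>. Because \<open>P\<^sub>F V\<^sup>* P\<^sub>V\<^sub>F = P\<^sub>F V\<^sup>*\<close> and \<open>V\<^sup>*\<close> commutes with T and U,
  the integrand of the transformed family at f is the integrand of the original family at
  \<open>V\<^sup>* f\<close>. Hence its upper frame bound is inherited, and its lower frame bound
  \<open>A'\<parallel>(VK)\<^sup>* f\<parallel>\<^sup>2 \<le> \<parallel>S\<^sup>1\<^sup>/\<^sup>2 V\<^sup>* f\<parallel>\<^sup>2\<close> is precisely the boundedness of \<open>[(VK)\<^sup>*/S\<^sup>1\<^sup>/\<^sup>2V\<^sup>*]\<close>.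
  Finally \<open>\<parallel>S\<^sup>1\<^sup>/\<^sup>2V\<^sup>*f\<parallel> = \<parallel>(VSV\<^sup>*)\<^sup>1\<^sup>/\<^sup>2f\<parallel>\<close>, both squares being \<open>\<langle>SV\<^sup>*f, V\<^sup>*f\<rangle>\<close>.\<close>

section \<open>Complex inner product spaces\<close>

lemma scaleC_zero_left [simp]: "scaleC 0 (x::'a::complex_inner) = 0"
  by (metis scaleR_scaleC scaleR_zero_left of_real_0)

lemma scaleC_zero_right [simp]: "scaleC a (0::'a::complex_inner) = 0"
  by (metis add_cancel_right_right scaleC_add_right add_0)

lemma scaleC_minus_right: "scaleC a (- (x::'a::complex_inner)) = - scaleC a x"
  by (metis add.right_inverse eq_neg_iff_add_eq_0 scaleC_add_right scaleC_zero_right)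

lemma scaleC_diff_right: "scaleC a ((x::'a::complex_inner) - y) = scaleC a x - scaleC a y"
  unfolding diff_conv_add_uminus by (simp only: scaleC_add_right scaleC_minus_right)

lemma cinner_zero_left [simp]: "cinner 0 (x::'a::complex_inner) = 0"
  by (metis add_cancel_right_right cinner_add_left add_0)

lemma cinner_zero_right [simp]: "cinner (x::'a::complex_inner) 0 = 0"
  by (metis cinner_commute cinner_zero_left complex_cnj_zero)

lemma cinner_add_right: "cinner (x::'a::complex_inner) (y + z) = cinner x y + cinner x z"
  by (metis cinner_commute cinner_add_left complex_cnj_add)

lemma cinner_scaleC_right: "cinner (x::'a::complex_inner) (scaleC a y) = cnj a * cinner x y"
  by (metis cinner_commute cinner_scaleC_left complex_cnj_mult)

lemma cinner_minus_left: "cinner (- x) (y::'a::complex_inner) = - cinner x y"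
  by (metis add.right_inverse cinner_add_left cinner_zero_left eq_neg_iff_add_eq_0)

lemma cinner_minus_right: "cinner y (- x::'a::complex_inner) = - cinner y x"
  by (metis add.right_inverse cinner_add_right cinner_zero_right eq_neg_iff_add_eq_0)

lemma cinner_diff_left: "cinner (x - y) (z::'a::complex_inner) = cinner x z - cinner y z"
  unfolding diff_conv_add_uminus by (simp only: cinner_add_left cinner_minus_left)

lemma cinner_diff_right: "cinner z (x - y::'a::complex_inner) = cinner z x - cinner z y"
  unfolding diff_conv_add_uminus by (simp only: cinner_add_right cinner_minus_right)

lemma cinner_scaleR_left: "cinner (scaleR r x) (y::'a::complex_inner) = of_real r * cinner x y"
  by (simp add: scaleR_scaleC cinner_scaleC_left)

lemma cinner_scaleR_right: "cinner y (scaleR r x::'a::complex_inner) = of_real r * cinner y x"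
  by (simp add: scaleR_scaleC cinner_scaleC_right)

lemma cinner_self_Re: "Re (cinner x (x::'a::complex_inner)) = (norm x)\<^sup>2"
  by (simp add: cinner_self_norm)

lemma cinner_self_Im: "Im (cinner x (x::'a::complex_inner)) = 0"
  by (simp add: cinner_self_norm)

lemma cinner_self_eq_0_iff: "cinner x x = 0 \<longleftrightarrow> (x::'a::complex_inner) = 0"
  by (simp add: cinner_self_norm)

lemma cinner_eq_imp_eq: "(\<And>z. cinner z x = cinner z (y::'a::complex_inner)) \<Longrightarrow> x = y"
  by (metis cinner_diff_right cinner_self_eq_0_iff eq_iff_diff_eq_0)

lemma norm_scaleC: "norm (scaleC a (x::'a::complex_inner)) = cmod a * norm x"
proof -
  have "cinner (scaleC a x) (scaleC a x) = a * cnj a * cinner x x"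
    by (simp add: cinner_scaleC_left cinner_scaleC_right mult.assoc)
  also have "a * cnj a = complex_of_real ((cmod a)\<^sup>2)" by (rule complex_norm_square[symmetric])
  finally have "(norm (scaleC a x))\<^sup>2 = (cmod a * norm x)\<^sup>2"
    unfolding cinner_self_norm of_real_mult[symmetric] of_real_eq_iff by (simp add: power_mult_distrib)
  then show ?thesis by (simp add: power2_eq_iff_nonneg)
qed

lemma norm_add_sq_cinner:
  "(norm (x + y::'a::complex_inner))\<^sup>2 = (norm x)\<^sup>2 + (norm y)\<^sup>2 + 2 * Re (cinner x y)"
proof -
  have "cinner (x + y) (x + y) = cinner x x + cinner y y + cinner x y + cinner y x"
    by (simp add: cinner_add_left cinner_add_right)
  then have "complex_of_real ((norm (x + y))\<^sup>2) = cinner x x + cinner y y + cinner x y + cinner y x"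
    by (simp only: cinner_self_norm)
  then have "(norm (x + y))\<^sup>2 = Re (cinner x x + cinner y y + cinner x y + cinner y x)"
    by (metis Re_complex_of_real)
  then show ?thesis by (subst (asm) cinner_commute[of y x]) (simp add: cinner_self_Re)
qed

lemma parallelogram_law:
  "(norm (a + b::'a::complex_inner))\<^sup>2 + (norm (a - b))\<^sup>2 = 2 * (norm a)\<^sup>2 + 2 * (norm b)\<^sup>2"
  using norm_add_sq_cinner[of a b] norm_add_sq_cinner[of a "- b"] by (simp add: cinner_minus_right)

lemma cinner_Cauchy_Schwarz: "cmod (cinner x (y::'a::complex_inner)) \<le> norm x * norm y"
proof (cases "y = 0")
  case True then show ?thesis by simp
next
  case False
  define t where "t = cinner x y / cinner y y"
  have yy: "cinner y y = of_real ((norm y)\<^sup>2)" by (simp add: cinner_self_norm)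
  \<comment> \<open>the norm of the component of x orthogonal to y\<close>
  have "complex_of_real ((norm (x - scaleC t y))\<^sup>2) = cinner (x - scaleC t y) (x - scaleC t y)"
    by (simp add: cinner_self_norm)
  also have "\<dots> = cinner x x - cnj t * cinner x y - t * cinner y x + t * cnj t * cinner y y"
    by (simp add: cinner_diff_left cinner_diff_right cinner_scaleC_left cinner_scaleC_right algebra_simps)
  also have "\<dots> = cinner x x - of_real ((cmod (cinner x y))\<^sup>2 / (norm y)\<^sup>2)"
    using False yy unfolding t_def
    by (subst cinner_commute[of y x]) (simp add: cinner_self_eq_0_iff field_simps complex_norm_square[symmetric])
  finally have "(cmod (cinner x y))\<^sup>2 / (norm y)\<^sup>2 \<le> (norm x)\<^sup>2"
    by (metis Re_complex_of_real cinner_self_Re diff_ge_0_iff_ge minus_complex.sel(1) zero_le_power2)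
  then have "(cmod (cinner x y))\<^sup>2 \<le> (norm x * norm y)\<^sup>2"
    using False by (simp add: field_simps power_mult_distrib)
  then show ?thesis by (meson norm_ge_zero mult_nonneg_nonneg power2_le_imp_le)
qed

lemma Re_cinner_le: "Re (cinner x (y::'a::complex_inner)) \<le> norm x * norm y"
  using complex_Re_le_cmod cinner_Cauchy_Schwarz order_trans by blast

lemma bounded_linear_cinner_left: "bounded_linear (\<lambda>x::'a::complex_inner. cinner x y)"
  by (rule bounded_linear_intro[where K = "norm y"])
    (auto simp: cinner_add_left cinner_scaleR_left scaleR_conv_of_real cinner_Cauchy_Schwarz)

lemma bounded_linear_cinner_right: "bounded_linear (\<lambda>x::'a::complex_inner. cinner y x)"
proof (rule bounded_linear_intro[where K = "norm y"])
  show "norm (cinner y x) \<le> norm x * norm y" for x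
    using cinner_Cauchy_Schwarz[of y x] by (simp add: mult.commute)
qed (auto simp: cinner_add_right cinner_scaleR_right scaleR_conv_of_real)

section \<open>Orthogonal projections\<close>

lemma closed_csubspace_zero: "closed_csubspace M \<Longrightarrow> 0 \<in> M"
  unfolding closed_csubspace_def by simp

lemma closed_csubspace_add: "closed_csubspace M \<Longrightarrow> x \<in> M \<Longrightarrow> y \<in> M \<Longrightarrow> x + y \<in> M"
  unfolding closed_csubspace_def by simp

lemma closed_csubspace_scaleC: "closed_csubspace M \<Longrightarrow> x \<in> M \<Longrightarrow> scaleC c x \<in> M"
  unfolding closed_csubspace_def by simp

lemma closed_csubspace_scaleR: "closed_csubspace M \<Longrightarrow> x \<in> M \<Longrightarrow> scaleR r x \<in> M"
  unfolding closed_csubspace_def by (simp add: scaleR_scaleC)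

lemma closed_csubspace_diff: "closed_csubspace M \<Longrightarrow> x \<in> M \<Longrightarrow> y \<in> M \<Longrightarrow> x - y \<in> M"
  using closed_csubspace_add[of M x "- y"] closed_csubspace_scaleR[of M y "- 1"] by simp

lemma cinner_eq_0_if_norm_minimal:
  fixes z m :: "'a::complex_inner"
  assumes "\<And>t. (norm z)\<^sup>2 \<le> (norm (z - scaleC t m))\<^sup>2"
  shows "cinner z m = 0"
proof -
  define c where "c = cinner z m"
  define s where "s = 1 / ((norm m)\<^sup>2 + 1)"
  have s0: "s > 0" unfolding s_def by (simp add: add_nonneg_pos)
  have sm: "s * (norm m)\<^sup>2 < 1"
    unfolding s_def by (simp add: divide_less_eq add_nonneg_pos)
  \<comment> \<open>a small step \<open>t = s c\<close> in direction m decreases the norm unless \<open>c = 0\<close>\<close>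
  define t where "t = complex_of_real s * c"
  have "cnj t * c = complex_of_real (s * (cmod c)\<^sup>2)"
    unfolding t_def by (simp add: mult.assoc mult.commute[of "cnj c"] complex_norm_square[symmetric])
  moreover have "norm (scaleC t m) = s * cmod c * norm m"
    by (simp add: norm_scaleC t_def norm_mult abs_of_pos[OF s0])
  ultimately have "(norm (z - scaleC t m))\<^sup>2 = (norm z)\<^sup>2 + (s * cmod c * norm m)\<^sup>2 - 2 * (s * (cmod c)\<^sup>2)"
    using norm_add_sq_cinner[of z "- scaleC t m"]
    by (simp add: cinner_minus_right cinner_scaleC_right c_def)
  with assms[of t] have "2 * (s * (cmod c)\<^sup>2) \<le> s * (cmod c)\<^sup>2 * (s * (norm m)\<^sup>2)"
    by (simp add: power_mult_distrib power2_eq_square algebra_simps)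
  with sm s0 have "(cmod c)\<^sup>2 \<le> 0"
    by (smt (verit) mult_le_cancel_left1 mult_pos_pos zero_le_power2 zero_less_power2)
  then show ?thesis unfolding c_def by simp
qed

lemma norm_diff_sq_le_if_midpoint:
  fixes x a b :: "'a::complex_inner"
  assumes "d \<le> (norm (x - scaleR (1/2) (a + b)))\<^sup>2"
  shows "(norm (a - b))\<^sup>2 \<le> 2 * (norm (x - a))\<^sup>2 + 2 * (norm (x - b))\<^sup>2 - 4 * d"
proof -
  have "x - scaleR (1/2) (a + b) = scaleR (1/2) ((x - a) + (x - b))"
    by (simp add: algebra_simps flip: scaleR_add_left)
  then have "(norm ((x - a) + (x - b)))\<^sup>2 = 4 * (norm (x - scaleR (1/2) (a + b)))\<^sup>2"
    by (simp add: power2_eq_square)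
  then show ?thesis
    using parallelogram_law[of "x - a" "x - b"] assms by (simp add: norm_minus_commute)
qed

lemma Cauchy_if_norm_diff_sq_le:
  fixes y :: "nat \<Rightarrow> 'a::real_normed_vector"
  assumes key: "\<And>n k. (norm (y n - y k))\<^sup>2 \<le> 2 / (real n + 1) + 2 / (real k + 1)"
  shows "Cauchy y"
proof (rule metric_CauchyI)
  fix e :: real assume e: "e > 0"
  obtain N :: nat where N: "4 / e\<^sup>2 < real N" using reals_Archimedean2 by blast
  have "dist (y m) (y n) < e" if "m \<ge> N" "n \<ge> N" for m n
  proof -
    have "4 / (real N + 1) < e\<^sup>2"
      using N e by (simp add: field_simps) (smt (verit) zero_less_power)
    moreover have "2 / (real m + 1) \<le> 2 / (real N + 1)" "2 / (real n + 1) \<le> 2 / (real N + 1)"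
      using that by (simp_all add: frac_le)
    ultimately have "(norm (y m - y n))\<^sup>2 < e\<^sup>2" using key[of m n] by linarith
    then show ?thesis using e by (simp add: dist_norm power_less_imp_less_base)
  qed
  then show "\<exists>N. \<forall>m\<ge>N. \<forall>n\<ge>N. dist (y m) (y n) < e" by blast
qed

lemma closed_csubspace_nearest_point:
  fixes M :: "'a::chilbert_space set"
  assumes M: "closed_csubspace M"
  shows "\<exists>z\<in>M. \<forall>m\<in>M. (norm (x - z))\<^sup>2 \<le> (norm (x - m))\<^sup>2"
proof -
  define d where "d = (INF m\<in>M. (norm (x - m))\<^sup>2)"
  have bdd: "bdd_below ((\<lambda>m. (norm (x - m))\<^sup>2) ` M)" by (rule bdd_belowI[of _ 0]) auto
  have d_le: "d \<le> (norm (x - m))\<^sup>2" if "m \<in> M" for m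
    unfolding d_def using bdd that by (rule cINF_lower)
  have "\<forall>n. \<exists>m\<in>M. (norm (x - m))\<^sup>2 < d + 1 / (real n + 1)"
  proof
    fix n
    have "d < d + 1 / (real n + 1)" by simp
    then show "\<exists>m\<in>M. (norm (x - m))\<^sup>2 < d + 1 / (real n + 1)"
      using cINF_less_iff[OF _ bdd] closed_csubspace_zero[OF M] unfolding d_def by blast
  qed
  then obtain y where yM: "\<And>n. y n \<in> M" and yd: "\<And>n. (norm (x - y n))\<^sup>2 < d + 1 / (real n + 1)"
    by metis
  have "(norm (y n - y k))\<^sup>2 \<le> 2 / (real n + 1) + 2 / (real k + 1)" for n k
  proof -
    have "scaleR (1/2) (y n + y k) \<in> M"
      by (intro closed_csubspace_scaleR[OF M] closed_csubspace_add[OF M yM yM])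
    from norm_diff_sq_le_if_midpoint[OF d_le[OF this]] yd[of n] yd[of k] show ?thesis
      by linarith
  qed
  then have "Cauchy y" by (rule Cauchy_if_norm_diff_sq_le)
  then obtain z where yz: "y \<longlonglongrightarrow> z" using convergent_eq_Cauchy convergent_def by blast
  have "z \<in> M"
    using M yM yz closed_sequentially unfolding closed_csubspace_def by blast
  moreover have "(norm (x - z))\<^sup>2 \<le> d"
  proof (rule LIMSEQ_le)
    show "(\<lambda>n. (norm (x - y n))\<^sup>2) \<longlonglongrightarrow> (norm (x - z))\<^sup>2" by (intro tendsto_intros yz)
    have "(\<lambda>n. 1 / (real n + 1)) \<longlonglongrightarrow> 0"
      using LIMSEQ_inverse_real_of_nat by (simp add: inverse_eq_divide add.commute)
    then show "(\<lambda>n. d + 1 / (real n + 1)) \<longlonglongrightarrow> d" using tendsto_add[OF tendsto_const] by fastforce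
  qed (use yd less_imp_le in blast)
  ultimately show ?thesis using d_le by (meson order_trans)
qed

lemma proj_exists:
  fixes M :: "'a::chilbert_space set"
  assumes M: "closed_csubspace M"
  shows "\<exists>z\<in>M. \<forall>m\<in>M. cinner (x - z) m = 0"
proof -
  obtain z where zM: "z \<in> M" and min: "\<And>m. m \<in> M \<Longrightarrow> (norm (x - z))\<^sup>2 \<le> (norm (x - m))\<^sup>2"
    using closed_csubspace_nearest_point[OF M] by blast
  have "cinner (x - z) m = 0" if "m \<in> M" for m
  proof (rule cinner_eq_0_if_norm_minimal)
    fix t
    have "z + scaleC t m \<in> M" by (intro closed_csubspace_add[OF M zM] closed_csubspace_scaleC[OF M that])
    from min[OF this] show "(norm (x - z))\<^sup>2 \<le> (norm (x - z - scaleC t m))\<^sup>2"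
      by (simp only: diff_diff_eq)
  qed
  with zM show ?thesis by blast
qed

lemma proj_unique:
  fixes M :: "'a::complex_inner set"
  assumes M: "closed_csubspace M"
    and "y \<in> M" "\<forall>m\<in>M. cinner (x - y) m = 0" "y' \<in> M" "\<forall>m\<in>M. cinner (x - y') m = 0"
  shows "y = y'"
proof -
  have "y - y' \<in> M" using closed_csubspace_diff[OF M] assms by blast
  with assms have "cinner (x - y') (y - y') - cinner (x - y) (y - y') = 0" by simp
  then have "cinner (y - y') (y - y') = 0" by (simp add: cinner_diff_left)
  then show ?thesis by (simp add: cinner_self_eq_0_iff)
qed

lemma
  fixes M :: "'a::chilbert_space set"
  assumes M: "closed_csubspace M"
  shows proj_in: "proj M x \<in> M"
    and cinner_proj_orthogonal: "m \<in> M \<Longrightarrow> cinner (x - proj M x) m = 0"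
proof -
  obtain y where y: "y \<in> M" "\<forall>m\<in>M. cinner (x - y) m = 0" using proj_exists[OF M] by blast
  have "proj M x = y" unfolding proj_def
    by (rule the_equality) (use y proj_unique[OF M] in blast)+
  then show "proj M x \<in> M" "m \<in> M \<Longrightarrow> cinner (x - proj M x) m = 0" using y by auto
qed

lemma proj_eqI:
  fixes M :: "'a::chilbert_space set"
  assumes M: "closed_csubspace M" and "y \<in> M" "\<And>m. m \<in> M \<Longrightarrow> cinner (x - y) m = 0"
  shows "proj M x = y"
  using proj_unique[OF M] proj_in[OF M] cinner_proj_orthogonal[OF M] assms by blast

lemma cinner_proj_left:
  fixes M :: "'a::chilbert_space set"
  assumes M: "closed_csubspace M"
  shows "cinner (proj M x) y = cinner x (proj M y)"
proof -
  have "cinner (x - proj M x) (proj M y) = 0" by (rule cinner_proj_orthogonal[OF M proj_in[OF M]])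
  moreover have "cinner (proj M x) (y - proj M y) = 0"
    using cinner_proj_orthogonal[OF M proj_in[OF M], of y x] by (subst cinner_commute) simp
  ultimately show ?thesis by (simp add: cinner_diff_left cinner_diff_right)
qed

section \<open>Bounded operators and adjoints\<close>

lemma clinear_op_add: "clinear_op A \<Longrightarrow> A (x + y) = A x + A y"
  unfolding clinear_op_def by blast

lemma clinear_op_scaleC: "clinear_op A \<Longrightarrow> A (scaleC c x) = scaleC c (A x)"
  unfolding clinear_op_def by blast

lemma clinear_op_scaleR: "clinear_op A \<Longrightarrow> A (scaleR r x) = scaleR r (A x)"
  by (simp add: scaleR_scaleC clinear_op_scaleC)

lemma clinear_op_zero: "clinear_op A \<Longrightarrow> A 0 = 0"
  using clinear_op_scaleC[of A 0 0] by simp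

lemma clinear_op_diff: "clinear_op A \<Longrightarrow> A (x - y) = A x - A y"
  using clinear_op_add[of A x "- y"] clinear_op_scaleR[of A "- 1" y] by simp

lemma clinear_op_comp: "clinear_op A \<Longrightarrow> clinear_op B \<Longrightarrow> clinear_op (A \<circ> B)"
  unfolding clinear_op_def by simp

lemma clinear_op_funpow: "clinear_op (C :: 'a::complex_inner \<Rightarrow> 'a) \<Longrightarrow> clinear_op (C ^^ k)"
proof (induction k)
  case (Suc k)
  then show ?case using clinear_op_comp[of "C ^^ k" C] by (simp only: funpow_Suc_right)
qed (simp add: clinear_op_def)

lemma bounded_op_clinear: "bounded_op A \<Longrightarrow> clinear_op A"
  unfolding bounded_op_def by simp

lemma bounded_op_bound:
  assumes "bounded_op A" shows "\<exists>C>0. \<forall>x. norm (A x) \<le> C * norm x"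
proof -
  obtain C where "\<forall>x. norm (A x) \<le> C * norm x" using assms unfolding bounded_op_def by blast
  moreover have "C * norm x \<le> (max C 0 + 1) * norm x" for x :: 'a
    by (intro mult_right_mono) auto
  ultimately have "\<forall>x. norm (A x) \<le> (max C 0 + 1) * norm x"
    by (meson order_trans)
  then show ?thesis by (intro exI[of _ "max C 0 + 1"]) auto
qed

lemma bounded_op_bounded_linear:
  assumes "bounded_op A" shows "bounded_linear A"
proof -
  obtain C where "clinear_op A" "\<forall>x. norm (A x) \<le> C * norm x"
    using assms unfolding bounded_op_def by blast
  then show ?thesis
    by (intro bounded_linear_intro[where K = C]) (auto simp: clinear_op_add clinear_op_scaleR mult.commute)
qed

lemma bounded_op_comp:
  assumes A: "bounded_op A" and B: "bounded_op B" shows "bounded_op (A \<circ> B)"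
proof -
  obtain CA where CA: "CA > 0" "\<forall>x. norm (A x) \<le> CA * norm x" using bounded_op_bound[OF A] by blast
  obtain CB where CB: "\<forall>x. norm (B x) \<le> CB * norm x" using bounded_op_bound[OF B] by blast
  have "norm (A (B x)) \<le> (CA * CB) * norm x" for x
  proof -
    have "norm (A (B x)) \<le> CA * norm (B x)" using CA by blast
    also have "\<dots> \<le> CA * (CB * norm x)" using CA CB by (intro mult_left_mono) auto
    finally show ?thesis by (simp add: mult.assoc)
  qed
  then show ?thesis
    using clinear_op_comp[OF bounded_op_clinear[OF A] bounded_op_clinear[OF B]]
    unfolding bounded_op_def by auto
qed

lemma riesz_representation:
  fixes \<phi> :: "'a::chilbert_space \<Rightarrow> complex"
  assumes add: "\<And>x y. \<phi> (x + y) = \<phi> x + \<phi> y" and scaleC: "\<And>c x. \<phi> (scaleC c x) = c * \<phi> x"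
    and bound: "\<And>x. cmod (\<phi> x) \<le> C * norm x"
  shows "\<exists>z. \<forall>x. \<phi> x = cinner x z"
proof (cases "\<forall>x. \<phi> x = 0")
  case True then show ?thesis by (intro exI[of _ 0]) simp
next
  case False
  then obtain x0 where x0: "\<phi> x0 \<noteq> 0" by blast
  have lin: "bounded_linear \<phi>"
  proof (rule bounded_linear_intro[where K = C])
    show "\<phi> (scaleR r x) = scaleR r (\<phi> x)" for r x
      by (simp only: scaleR_scaleC scaleC scaleR_conv_of_real)
    show "norm (\<phi> x) \<le> norm x * C" for x
      using bound[of x] by (simp only: norm_complex_def mult.commute)
  qed (rule add)
  then have \<phi>diff: "\<phi> (a - b) = \<phi> a - \<phi> b" for a b by (rule linear_diff[OF bounded_linear.linear])
  define N where "N = {x. \<phi> x = 0}"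
  have N: "closed_csubspace N"
    unfolding closed_csubspace_def N_def
    using closed_Collect_eq[OF linear_continuous_on[OF lin] continuous_on_const]
    by (auto simp: add scaleC linear_0[OF bounded_linear.linear[OF lin]])
  \<comment> \<open>the component of \<open>x0\<close> orthogonal to the kernel spans its complement\<close>
  define w where "w = x0 - proj N x0"
  have worth: "\<And>m. m \<in> N \<Longrightarrow> cinner w m = 0" unfolding w_def by (rule cinner_proj_orthogonal[OF N])
  have \<phi>w: "\<phi> w = \<phi> x0" using proj_in[OF N, of x0] unfolding w_def N_def by (simp add: \<phi>diff)
  then have "cinner w w \<noteq> 0" using x0 by (auto simp: cinner_self_eq_0_iff linear_0[OF bounded_linear.linear[OF lin]])
  show ?thesis
  proof (intro exI allI)
    fix x
    have "\<phi> (x - scaleC (\<phi> x / \<phi> w) w) = 0"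
      using \<phi>w x0 by (simp add: \<phi>diff scaleC)
    then have "cinner w (x - scaleC (\<phi> x / \<phi> w) w) = 0" by (intro worth) (simp add: N_def)
    then have "cinner (x - scaleC (\<phi> x / \<phi> w) w) w = 0" by (subst cinner_commute) simp
    then have "cinner x w = (\<phi> x / \<phi> w) * cinner w w"
      by (simp add: cinner_diff_left cinner_scaleC_left)
    with \<open>cinner w w \<noteq> 0\<close> x0 \<phi>w show "\<phi> x = cinner x (scaleC (cnj (\<phi> w / cinner w w)) w)"
      by (simp add: cinner_scaleC_right field_simps)
  qed
qed

lemma adjoint_exists:
  fixes A :: "'a::chilbert_space \<Rightarrow> 'b::complex_inner"
  assumes A: "bounded_op A"
  shows "\<exists>B. \<forall>x y. cinner (A x) y = cinner x (B y)"
proof -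
  obtain C where C: "C > 0" "\<forall>x. norm (A x) \<le> C * norm x" using bounded_op_bound[OF A] by blast
  have "\<exists>z. \<forall>x. cinner (A x) y = cinner x z" for y
  proof (rule riesz_representation)
    show "cmod (cinner (A x) y) \<le> (C * norm y) * norm x" for x
      using cinner_Cauchy_Schwarz[of "A x" y] C mult_right_mono[of "norm (A x)" "C * norm x" "norm y"]
      by (simp add: ac_simps)
  qed (simp_all add: clinear_op_add clinear_op_scaleC bounded_op_clinear[OF A]
      cinner_add_left cinner_scaleC_left)
  then show ?thesis by metis
qed

lemma cinner_adj:
  fixes A :: "'a::chilbert_space \<Rightarrow> 'b::complex_inner"
  assumes A: "bounded_op A"
  shows "cinner (A x) y = cinner x (adj A y)"
proof -
  obtain B where B: "\<forall>x y. cinner (A x) y = cinner x (B y)" using adjoint_exists[OF A] by blast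
  have "adj A = B" unfolding adj_def
  proof (rule the_equality)
    fix B' assume "\<forall>x y. cinner (A x) y = cinner x (B' y)"
    with B show "B' = B" by (metis cinner_eq_imp_eq ext)
  qed (rule B)
  then show ?thesis using B by simp
qed

lemma cinner_adj_left:
  fixes A :: "'a::chilbert_space \<Rightarrow> 'b::complex_inner"
  assumes A: "bounded_op A"
  shows "cinner (adj A y) x = cinner y (A x)"
  using cinner_adj[OF A, of x y] by (metis cinner_commute)

lemma bounded_op_adj:
  fixes A :: "'a::chilbert_space \<Rightarrow> 'b::complex_inner"
  assumes A: "bounded_op A"
  shows "bounded_op (adj A)"
proof -
  obtain C where C: "C > 0" "\<forall>x. norm (A x) \<le> C * norm x" using bounded_op_bound[OF A] by blast
  have "clinear_op (adj A)" unfolding clinear_op_def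
    by (intro conjI allI; rule cinner_eq_imp_eq)
      (simp_all add: cinner_adj[OF A, symmetric] cinner_add_right cinner_scaleC_right)
  moreover have "norm (adj A y) \<le> C * norm y" for y
  proof (cases "adj A y = 0")
    case True then show ?thesis using C by simp
  next
    case False
    have "(norm (adj A y))\<^sup>2 = Re (cinner (A (adj A y)) y)"
      by (simp add: cinner_adj[OF A] cinner_self_Re)
    also have "\<dots> \<le> norm (A (adj A y)) * norm y" by (rule Re_cinner_le)
    also have "\<dots> \<le> (C * norm (adj A y)) * norm y" using C by (intro mult_right_mono) auto
    finally show ?thesis using False by (simp add: power2_eq_square ac_simps)
  qed
  ultimately show ?thesis unfolding bounded_op_def by blast
qed

section \<open>Hermitian operators with nonnegative form\<close>

definition hermitian_op :: "('a::complex_inner \<Rightarrow> 'a) \<Rightarrow> bool" where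
  "hermitian_op P \<longleftrightarrow> (\<forall>x y. cinner (P x) y = cinner x (P y))"

definition nonneg_form :: "('a::complex_inner \<Rightarrow> 'a) \<Rightarrow> bool" where
  "nonneg_form P \<longleftrightarrow> (\<forall>x. Im (cinner (P x) x) = 0 \<and> 0 \<le> Re (cinner (P x) x))"

lemma hermitian_opI_polarization:
  assumes L: "clinear_op P" and real: "\<And>x. Im (cinner (P x) x) = 0"
  shows "hermitian_op P"
  unfolding hermitian_op_def
proof (intro allI)
  fix x y
  have "cinner (P (x + y)) (x + y) = cinner (P x) x + cinner (P y) y + cinner (P x) y + cinner (P y) x"
    by (simp add: clinear_op_add[OF L] cinner_add_left cinner_add_right)
  then have "Im (cinner (P x) y) = - Im (cinner (P y) x)"
    using real[of "x + y"] real[of x] real[of y] by simp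
  moreover have "cinner (P (x + scaleC \<i> y)) (x + scaleC \<i> y)
      = cinner (P x) x + cinner (P y) y - \<i> * cinner (P x) y + \<i> * cinner (P y) x"
    by (simp add: clinear_op_add[OF L] clinear_op_scaleC[OF L] cinner_add_left cinner_add_right
        cinner_scaleC_left cinner_scaleC_right algebra_simps)
  then have "Re (cinner (P x) y) = Re (cinner (P y) x)"
    using real[of "x + scaleC \<i> y"] real[of x] real[of y] by simp
  ultimately have "cinner (P x) y = cnj (cinner (P y) x)" by (simp add: complex_eq_iff)
  then show "cinner (P x) y = cinner x (P y)" by (simp add: cinner_commute[of x])
qed

lemma hermitian_op_Im_form:
  assumes "hermitian_op P" shows "Im (cinner (P x) x) = 0"
  using assms unfolding hermitian_op_def by (metis cinner_commute Reals_cnj_iff complex_is_Real_iff)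

lemma positive_op_nonneg_form: "positive_op A \<Longrightarrow> nonneg_form A"
  unfolding positive_op_def nonneg_form_def by blast

lemma positive_op_hermitian: "positive_op A \<Longrightarrow> hermitian_op A"
  unfolding positive_op_def by (intro hermitian_opI_polarization) (auto simp: bounded_op_def)

lemma positive_op_clinear: "positive_op A \<Longrightarrow> clinear_op A"
  unfolding positive_op_def bounded_op_def by blast

text \<open>Cauchy--Schwarz for the semi-inner product \<open>\<langle>P x, y\<rangle>\<close>, applied to \<open>y = P x\<close>.\<close>

lemma nonneg_form_norm_sq_le:
  assumes L: "clinear_op P" and H: "hermitian_op P" and pos: "nonneg_form P"
    and bound: "\<And>x. norm (P x) \<le> c * norm x" and c: "c > 0"
  shows "(norm (P x))\<^sup>2 \<le> c * Re (cinner (P x) x)"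
proof -
  define t where "t = 1 / c"
  define a where "a = Re (cinner (P x) x)"
  define b where "b = (norm (P x))\<^sup>2"
  have Py: "cinner (P x) (P x) = of_real b" "cinner (P (P x)) x = of_real b"
    using H unfolding b_def hermitian_op_def by (simp_all add: cinner_self_norm)
  have "0 \<le> Re (cinner (P (x - scaleR t (P x))) (x - scaleR t (P x)))"
    using pos unfolding nonneg_form_def by blast
  also have "\<dots> = a - 2 * t * b + t * t * Re (cinner (P (P x)) (P x))"
    by (simp add: a_def Py clinear_op_diff[OF L] clinear_op_scaleR[OF L] cinner_diff_left
        cinner_diff_right cinner_scaleR_left cinner_scaleR_right algebra_simps)
  also have "Re (cinner (P (P x)) (P x)) \<le> c * b"
    using Re_cinner_le[of "P (P x)" "P x"] bound[of "P x"] mult_right_mono[of _ _ "norm (P x)"]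
    unfolding b_def by (smt (verit) norm_ge_zero power2_eq_square mult.assoc)
  then have "a - 2 * t * b + t * t * Re (cinner (P (P x)) (P x)) \<le> a - 2 * t * b + t * t * (c * b)"
    by (simp add: mult_left_mono)
  finally have "0 \<le> a - b / c" unfolding t_def using c by (simp add: field_simps power2_eq_square)
  then show ?thesis unfolding a_def b_def using c by (simp add: field_simps)
qed

lemma hermitian_op_funpow:
  assumes "hermitian_op C" shows "hermitian_op (C ^^ k)"
  using assms unfolding hermitian_op_def by (induction k) (simp_all add: funpow_swap1)

lemma nonneg_form_funpow:
  assumes H: "hermitian_op C" and P: "nonneg_form C"
  shows "nonneg_form (C ^^ k)"
  unfolding nonneg_form_def
proof
  fix x
  have HC: "cinner ((C ^^ j) y) z = cinner y ((C ^^ j) z)" for j y z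
    using hermitian_op_funpow[OF H] unfolding hermitian_op_def by blast
  \<comment> \<open>\<open>\<langle>C\<^sup>2\<^sup>j x, x\<rangle> = \<parallel>C\<^sup>j x\<parallel>\<^sup>2\<close> and \<open>\<langle>C\<^sup>2\<^sup>j\<^sup>+\<^sup>1 x, x\<rangle> = \<langle>C (C\<^sup>j x), C\<^sup>j x\<rangle>\<close>\<close>
  have "0 \<le> Re (cinner ((C ^^ k) x) x)"
  proof (cases "even k")
    case True
    then obtain j where "k = j + j" by (metis evenE mult_2)
    then have "cinner ((C ^^ k) x) x = cinner ((C ^^ j) x) ((C ^^ j) x)"
      by (simp add: funpow_add HC)
    then show ?thesis by (simp add: cinner_self_Re)
  next
    case False
    then obtain j where "k = j + (1 + j)" by (metis oddE add.commute add.left_commute mult_2)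
    then have "cinner ((C ^^ k) x) x = cinner (C ((C ^^ j) x)) ((C ^^ j) x)"
      by (simp add: funpow_add funpow_swap1 HC)
    then show ?thesis using P unfolding nonneg_form_def by simp
  qed
  then show "Im (cinner ((C ^^ k) x) x) = 0 \<and> 0 \<le> Re (cinner ((C ^^ k) x) x)"
    using hermitian_op_Im_form[OF hermitian_op_funpow[OF H]] by blast
qed

section \<open>Polynomials with nonnegative coefficients in an operator\<close>

inductive nonneg_poly :: "('a::complex_inner \<Rightarrow> 'a) \<Rightarrow> ('a \<Rightarrow> 'a) \<Rightarrow> bool" for C where
  zero: "nonneg_poly C (\<lambda>x. 0)"
| monom: "0 \<le> r \<Longrightarrow> nonneg_poly C P \<Longrightarrow> nonneg_poly C (\<lambda>x. scaleR r ((C ^^ k) x) + P x)"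

lemma nonneg_poly_add:
  assumes "nonneg_poly C P" "nonneg_poly C Q"
  shows "nonneg_poly C (\<lambda>x. P x + Q x)"
  using assms(1)
proof induction
  case zero then show ?case using assms(2) by simp
next
  case (monom r P k)
  from nonneg_poly.monom[OF monom.hyps(1) monom.IH, of k] show ?case by (simp add: add.assoc)
qed

lemma nonneg_poly_scaleR:
  assumes "0 \<le> s" "nonneg_poly C P"
  shows "nonneg_poly C (\<lambda>x. scaleR s (P x))"
  using assms(2)
proof induction
  case zero then show ?case by (simp add: nonneg_poly.zero)
next
  case (monom r P k)
  from nonneg_poly.monom[OF mult_nonneg_nonneg[OF assms(1) monom.hyps(1)] monom.IH, of k]
  show ?case by (simp add: scaleR_add_right)
qed

lemma nonneg_poly_funpow_comp:
  assumes C: "clinear_op C" and P: "nonneg_poly C P"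
  shows "nonneg_poly C (\<lambda>x. (C ^^ j) (P x))"
  using P
proof induction
  case zero then show ?case by (simp add: clinear_op_zero[OF clinear_op_funpow[OF C]] nonneg_poly.zero)
next
  case (monom r P k)
  from nonneg_poly.monom[OF monom.hyps(1) monom.IH, of "j + k"] show ?case
    by (simp add: clinear_op_add[OF clinear_op_funpow[OF C]] clinear_op_scaleR[OF clinear_op_funpow[OF C]]
        funpow_add)
qed

lemma nonneg_poly_comp:
  assumes C: "clinear_op C" and P: "nonneg_poly C P" and Q: "nonneg_poly C Q"
  shows "nonneg_poly C (\<lambda>x. P (Q x))"
  using P
proof induction
  case zero then show ?case by (rule nonneg_poly.zero)
next
  case (monom r P k)
  show ?case
    by (rule nonneg_poly_add[OF nonneg_poly_scaleR[OF monom.hyps(1) nonneg_poly_funpow_comp[OF C Q]] monom.IH])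
qed

lemma nonneg_poly_clinear:
  assumes C: "clinear_op C" and P: "nonneg_poly C P"
  shows "clinear_op P"
  using P
proof induction
  case zero then show ?case by (simp add: clinear_op_def)
next
  case (monom r P k)
  have Ck: "clinear_op (C ^^ k)" by (rule clinear_op_funpow[OF C])
  have "scaleR r (scaleC c y) = scaleC c (scaleR r y)" for c and y :: 'a
    by (simp add: scaleR_scaleC scaleC_scaleC mult.commute)
  then show ?case using monom.IH
    unfolding clinear_op_def
    by (simp add: clinear_op_add[OF Ck] clinear_op_scaleC[OF Ck] scaleR_add_right scaleC_add_right)
qed

lemma nonneg_poly_commute:
  assumes W: "clinear_op W" and WC: "\<And>x. W (C x) = C (W x)" and P: "nonneg_poly C P"
  shows "W (P x) = P (W x)"
proof -
  have "W ((C ^^ k) x) = (C ^^ k) (W x)" for k x by (induction k) (simp_all add: WC)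
  with P show ?thesis
    by induction (simp_all add: clinear_op_zero[OF W] clinear_op_add[OF W] clinear_op_scaleR[OF W])
qed

lemma nonneg_poly_nonneg_form:
  assumes H: "hermitian_op C" and pos: "nonneg_form C" and P: "nonneg_poly C P"
  shows "nonneg_form P"
  using P
proof induction
  case zero then show ?case by (simp add: nonneg_form_def)
next
  case (monom r P k)
  with nonneg_form_funpow[OF H pos, of k] show ?case
    by (simp add: nonneg_form_def cinner_add_left cinner_scaleR_left)
qed

lemma nonneg_poly_hermitian:
  assumes "clinear_op C" "hermitian_op C" "nonneg_form C" "nonneg_poly C P"
  shows "hermitian_op P"
proof (rule hermitian_opI_polarization)
  show "clinear_op P" by (rule nonneg_poly_clinear[OF assms(1,4)])
  show "Im (cinner (P x) x) = 0" for x
    using nonneg_poly_nonneg_form[OF assms(2-4)] unfolding nonneg_form_def by blast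
qed

section \<open>The positive square root\<close>

locale sqrt_iteration =
  fixes C :: "'a::chilbert_space \<Rightarrow> 'a"
  assumes clinear: "clinear_op C" and hermitian: "hermitian_op C" and nonneg: "nonneg_form C"
    and contraction: "\<And>x. norm (C x) \<le> norm x"
begin

primrec Y :: "nat \<Rightarrow> 'a \<Rightarrow> 'a" where
  "Y 0 x = 0"
| "Y (Suc n) x = scaleR (1/2) (C x) + scaleR (1/2) (Y n (Y n x))"

lemma nonneg_poly_Y: "nonneg_poly C (Y n)"
proof (induction n)
  case 0
  have "Y 0 = (\<lambda>x. 0)" by auto
  then show ?case by (simp add: nonneg_poly.zero)
next
  case (Suc n)
  have "nonneg_poly C (\<lambda>x. scaleR (1/2) ((C ^^ 1) x) + scaleR (1/2) (Y n (Y n x)))"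
    by (rule nonneg_poly.monom[OF _ nonneg_poly_scaleR[OF _ nonneg_poly_comp[OF clinear Suc Suc]]]) simp_all
  then show ?case by simp
qed

lemma clinear_Y: "clinear_op (Y n)"
  by (rule nonneg_poly_clinear[OF clinear nonneg_poly_Y])

lemma hermitian_Y: "hermitian_op (Y n)"
  by (rule nonneg_poly_hermitian[OF clinear hermitian nonneg nonneg_poly_Y])

lemma Y_commute: "Y m (Y n x) = Y n (Y m x)"
proof (rule nonneg_poly_commute[OF clinear_Y _ nonneg_poly_Y])
  show "Y m (C x) = C (Y m x)" for x
    by (rule nonneg_poly_commute[OF clinear _ nonneg_poly_Y, symmetric]) simp
qed

lemma nonneg_poly_Y_Suc_diff: "nonneg_poly C (\<lambda>x. Y (Suc n) x - Y n x)"
proof (induction n)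
  case 0
  show ?case using nonneg_poly_Y[of 1] by (simp only: Y.simps(1) diff_zero One_nat_def)
next
  case (Suc n)
  \<comment> \<open>\<open>Y\<^sub>n\<^sub>+\<^sub>2 - Y\<^sub>n\<^sub>+\<^sub>1 = (Y\<^sub>n\<^sub>+\<^sub>1\<^sup>2 - Y\<^sub>n\<^sup>2)/2 = (Y\<^sub>n\<^sub>+\<^sub>1 + Y\<^sub>n)(Y\<^sub>n\<^sub>+\<^sub>1 - Y\<^sub>n)/2\<close>, using that the \<open>Y\<^sub>n\<close> commute\<close>
  let ?D = "\<lambda>x. Y (Suc n) x - Y n x"
  have comp: "nonneg_poly C (\<lambda>x. Y m (?D x))" for m
    by (rule nonneg_poly_comp[OF clinear nonneg_poly_Y Suc.IH])
  have "nonneg_poly C (\<lambda>x. scaleR (1/2) (Y (Suc n) (?D x) + Y n (?D x)))"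
    by (rule nonneg_poly_scaleR[OF _ nonneg_poly_add[OF comp[of "Suc n"] comp[of n]]]) simp
  moreover have "Y (Suc (Suc n)) x - Y (Suc n) x = scaleR (1/2) (Y (Suc n) (?D x) + Y n (?D x))" for x
    using Y_commute[of n "Suc n" x]
    by (simp only: Y.simps(2)[of "Suc n"] Y.simps(2)[of n] clinear_op_diff[OF clinear_Y])
      (simp add: algebra_simps)
  ultimately show ?case by simp
qed

lemma Y_contraction: "norm (Y n x) \<le> norm x"
proof (induction n arbitrary: x)
  case (Suc n)
  have "norm (Y (Suc n) x) \<le> (1/2) * norm (C x) + (1/2) * norm (Y n (Y n x))"
    using norm_triangle_ineq[of "scaleR (1/2) (C x)" "scaleR (1/2) (Y n (Y n x))"] by simp
  also have "\<dots> \<le> (1/2) * norm x + (1/2) * norm x"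
    using contraction[of x] Suc[of x] Suc[of "Y n x"] by simp
  finally show ?case by simp
qed simp

lemma Re_form_Y_le: "Re (cinner (Y n x) x) \<le> (norm x)\<^sup>2"
  using Re_cinner_le[of "Y n x" x] mult_right_mono[OF Y_contraction[of n x] norm_ge_zero[of x]]
  by (simp add: power2_eq_square)

lemma Re_form_Y_mono: "m \<le> n \<Longrightarrow> Re (cinner (Y m x) x) \<le> Re (cinner (Y n x) x)"
proof (induction n rule: dec_induct)
  case (step n)
  have "0 \<le> Re (cinner (Y (Suc n) x - Y n x) x)"
    using nonneg_poly_nonneg_form[OF hermitian nonneg nonneg_poly_Y_Suc_diff, of n]
    unfolding nonneg_form_def by blast
  with step.IH show ?case by (simp add: cinner_diff_left)
qed simp

lemma norm_Y_diff_sq_le: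
  assumes "n \<le> m"
  shows "(norm (Y m x - Y n x))\<^sup>2 \<le> 2 * (Re (cinner (Y m x) x) - Re (cinner (Y n x) x))"
proof -
  define P where "P = (\<lambda>z. Y m z - Y n z)"
  have "clinear_op P" unfolding P_def clinear_op_def
    using clinear_Y[of m] clinear_Y[of n] by (simp add: clinear_op_add clinear_op_scaleC scaleC_diff_right)
  moreover have "hermitian_op P"
    using hermitian_Y[of m] hermitian_Y[of n]
    unfolding P_def hermitian_op_def by (simp add: cinner_diff_left cinner_diff_right)
  moreover have "nonneg_form P"
    using hermitian_op_Im_form[OF hermitian_Y[of m]] hermitian_op_Im_form[OF hermitian_Y[of n]]
      Re_form_Y_mono[OF assms]
    unfolding nonneg_form_def P_def by (simp add: cinner_diff_left)
  moreover have "norm (P z) \<le> 2 * norm z" for z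
    using norm_triangle_ineq4[of "Y m z" "Y n z"] Y_contraction[of m z] Y_contraction[of n z]
    unfolding P_def by simp
  ultimately have "(norm (P x))\<^sup>2 \<le> 2 * Re (cinner (P x) x)"
    by (intro nonneg_form_norm_sq_le) simp_all
  then show ?thesis by (simp add: P_def cinner_diff_left)
qed

text \<open>The forms \<open>\<langle>Y\<^sub>n x, x\<rangle>\<close> increase and are bounded, hence Cauchy; the previous lemma
  transfers this to the vectors \<open>Y\<^sub>n x\<close>.\<close>

lemma Y_convergent: "convergent (\<lambda>n. Y n x)"
proof -
  define q where "q n = Re (cinner (Y n x) x)" for n
  have "incseq q" unfolding q_def incseq_def using Re_form_Y_mono by blast
  moreover have "\<bar>q n\<bar> \<le> (norm x)\<^sup>2" for n
    using Re_form_Y_le[of n x] Re_form_Y_mono[of 0 n x] unfolding q_def by simp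
  ultimately have "Cauchy q"
    by (intro convergent_Cauchy Bseq_mono_convergent BseqI'[where K = "(norm x)\<^sup>2"]) (auto simp: incseq_def)
  have "Cauchy (\<lambda>n. Y n x)"
  proof (rule metric_CauchyI)
    fix e :: real assume e: "e > 0"
    then obtain N where N: "\<And>m n. m \<ge> N \<Longrightarrow> n \<ge> N \<Longrightarrow> dist (q m) (q n) < e\<^sup>2 / 2"
      using \<open>Cauchy q\<close> unfolding Cauchy_def by (meson half_gt_zero zero_less_power)
    have "dist (Y m x) (Y n x) < e" if "n \<le> m" "n \<ge> N" for m n
    proof -
      have "(norm (Y m x - Y n x))\<^sup>2 \<le> 2 * (q m - q n)"
        using norm_Y_diff_sq_le[OF that(1)] unfolding q_def .
      moreover have "q m - q n < e\<^sup>2 / 2"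
        using N[OF order_trans[OF that(2,1)] that(2)] unfolding dist_real_def by linarith
      ultimately have "(norm (Y m x - Y n x))\<^sup>2 < e\<^sup>2" by (simp add: field_simps)
      then show ?thesis using e by (simp add: dist_norm power_less_imp_less_base)
    qed
    then show "\<exists>N. \<forall>m\<ge>N. \<forall>n\<ge>N. dist (Y m x) (Y n x) < e"
      by (metis dist_commute nle_le order_trans)
  qed
  then show ?thesis using Cauchy_convergent by blast
qed

definition Ylim :: "'a \<Rightarrow> 'a" where "Ylim x = lim (\<lambda>n. Y n x)"

lemma Y_tendsto_Ylim: "(\<lambda>n. Y n x) \<longlonglongrightarrow> Ylim x"
  unfolding Ylim_def using Y_convergent convergent_LIMSEQ_iff by blast

lemma Ylim_contraction: "norm (Ylim x) \<le> norm x"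
  by (rule LIMSEQ_le_const2[OF tendsto_norm[OF Y_tendsto_Ylim]]) (use Y_contraction in auto)

lemma clinear_Ylim: "clinear_op Ylim"
  unfolding clinear_op_def
proof (intro conjI allI)
  fix x y
  have "(\<lambda>n. Y n (x + y)) \<longlonglongrightarrow> Ylim x + Ylim y"
    using tendsto_add[OF Y_tendsto_Ylim Y_tendsto_Ylim] by (simp add: clinear_op_add[OF clinear_Y])
  then show "Ylim (x + y) = Ylim x + Ylim y" using Y_tendsto_Ylim LIMSEQ_unique by blast
next
  fix c x
  have "bounded_linear (scaleC c :: 'a \<Rightarrow> 'a)"
    by (rule bounded_linear_intro[where K = "cmod c"])
      (simp_all add: scaleC_add_right norm_scaleC scaleR_scaleC scaleC_scaleC mult.commute)
  from bounded_linear.tendsto[OF this Y_tendsto_Ylim]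
  have "(\<lambda>n. Y n (scaleC c x)) \<longlonglongrightarrow> scaleC c (Ylim x)" by (simp add: clinear_op_scaleC[OF clinear_Y])
  then show "Ylim (scaleC c x) = scaleC c (Ylim x)" using Y_tendsto_Ylim LIMSEQ_unique by blast
qed

lemma hermitian_Ylim: "hermitian_op Ylim"
  unfolding hermitian_op_def
proof (intro allI)
  fix x y
  have "(\<lambda>n. cinner (Y n x) y) \<longlonglongrightarrow> cinner (Ylim x) y"
    by (rule bounded_linear.tendsto[OF bounded_linear_cinner_left Y_tendsto_Ylim])
  moreover have "(\<lambda>n. cinner x (Y n y)) \<longlonglongrightarrow> cinner x (Ylim y)"
    by (rule bounded_linear.tendsto[OF bounded_linear_cinner_right Y_tendsto_Ylim])
  moreover have "cinner (Y n x) y = cinner x (Y n y)" for n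
    using hermitian_Y unfolding hermitian_op_def by blast
  ultimately show "cinner (Ylim x) y = cinner x (Ylim y)" using LIMSEQ_unique by force
qed

lemma Re_form_Ylim_le: "Re (cinner (Ylim x) x) \<le> (norm x)\<^sup>2"
  using Re_cinner_le[of "Ylim x" x] mult_right_mono[OF Ylim_contraction[of x] norm_ge_zero[of x]]
  by (simp add: power2_eq_square)

lemma Ylim_fixpoint: "Ylim x = scaleR (1/2) (C x) + scaleR (1/2) (Ylim (Ylim x))"
proof -
  have "(\<lambda>n. Y n (Y n x) - Y n (Ylim x)) \<longlonglongrightarrow> 0"
  proof (rule Lim_null_comparison)
    show "(\<lambda>n. norm (Y n x - Ylim x)) \<longlonglongrightarrow> 0"
      using Y_tendsto_Ylim by (intro tendsto_norm_zero LIM_zero)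
    show "\<forall>\<^sub>F n in sequentially. norm (Y n (Y n x) - Y n (Ylim x)) \<le> norm (Y n x - Ylim x)"
      using Y_contraction by (simp add: clinear_op_diff[OF clinear_Y, symmetric])
  qed
  from tendsto_add[OF this Y_tendsto_Ylim[of "Ylim x"]]
  have "(\<lambda>n. Y n (Y n x)) \<longlonglongrightarrow> Ylim (Ylim x)" by simp
  then have "(\<lambda>n. Y (Suc n) x) \<longlonglongrightarrow> scaleR (1/2) (C x) + scaleR (1/2) (Ylim (Ylim x))"
    unfolding Y.simps(2) by (intro tendsto_add tendsto_scaleR tendsto_const)
  moreover have "(\<lambda>n. Y (Suc n) x) \<longlonglongrightarrow> Ylim x" by (rule LIMSEQ_Suc[OF Y_tendsto_Ylim])
  ultimately show ?thesis using LIMSEQ_unique by blast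
qed

lemma Ylim_complement_square: "(x - Ylim x) - Ylim (x - Ylim x) = x - C x"
proof -
  have "scaleR 2 (Ylim x) = C x + Ylim (Ylim x)"
    using arg_cong[OF Ylim_fixpoint[of x], of "scaleR 2"] by (simp add: scaleR_add_right)
  then show ?thesis by (simp add: clinear_op_diff[OF clinear_Ylim] scaleR_2 algebra_simps)
qed

lemma Ylim_commute:
  assumes W: "bounded_op W" and WC: "\<And>x. W (C x) = C (W x)"
  shows "W (Ylim x) = Ylim (W x)"
proof -
  have "(\<lambda>n. W (Y n x)) \<longlonglongrightarrow> W (Ylim x)"
    by (rule bounded_linear.tendsto[OF bounded_op_bounded_linear[OF W] Y_tendsto_Ylim])
  moreover have "W (Y n x) = Y n (W x)" for n
    by (rule nonneg_poly_commute[OF bounded_op_clinear[OF W] WC nonneg_poly_Y])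
  ultimately have "(\<lambda>n. Y n (W x)) \<longlonglongrightarrow> W (Ylim x)" by simp
  from LIMSEQ_unique[OF Y_tendsto_Ylim this] show ?thesis by (rule sym)
qed

end

lemma sqrt_iteration_shifted:
  fixes A :: "'a::chilbert_space \<Rightarrow> 'a"
  assumes A: "positive_op A" and c: "0 < c" and bound: "\<And>x. norm (A x) \<le> c * norm x"
  shows "sqrt_iteration (\<lambda>x. x - scaleR (1/c) (A x))"
proof
  let ?B = "\<lambda>x. scaleR (1/c) (A x)"
  have LA: "clinear_op A" and HA: "hermitian_op A" and PA: "nonneg_form A"
    using A positive_op_clinear positive_op_hermitian positive_op_nonneg_form by blast+
  have ReB: "Re (cinner (?B x) x) = Re (cinner (A x) x) / c" for x
    by (simp add: cinner_scaleR_left)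
  have ReA: "Re (cinner (A x) x) \<le> c * (norm x)\<^sup>2" for x
    using Re_cinner_le[of "A x" x] mult_right_mono[OF bound[of x] norm_ge_zero[of x]]
    by (simp add: power2_eq_square mult.assoc)
  have "scaleR r (scaleC d y) = scaleC d (scaleR r y)" for r d and y :: 'a
    by (simp add: scaleR_scaleC scaleC_scaleC mult.commute)
  then show "clinear_op (\<lambda>x. x - ?B x)"
    unfolding clinear_op_def
    by (simp add: clinear_op_add[OF LA] clinear_op_scaleC[OF LA] scaleC_diff_right algebra_simps)
  show "hermitian_op (\<lambda>x. x - ?B x)"
    using HA unfolding hermitian_op_def
    by (simp add: cinner_diff_left cinner_diff_right cinner_scaleR_left cinner_scaleR_right)
  show "nonneg_form (\<lambda>x. x - ?B x)"
    using PA ReA c unfolding nonneg_form_def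
    by (simp add: cinner_diff_left cinner_scaleR_left cinner_self_Re cinner_self_Im divide_le_eq mult.commute)
  show "norm (x - ?B x) \<le> norm x" for x
  proof -
    have "(norm (A x))\<^sup>2 \<le> c * Re (cinner (A x) x)"
      by (rule nonneg_form_norm_sq_le[OF LA HA PA bound c])
    then have "(norm (?B x))\<^sup>2 \<le> Re (cinner (?B x) x)"
      using c by (simp add: ReB field_simps power2_eq_square)
    moreover have "0 \<le> Re (cinner (?B x) x)"
      using PA c unfolding ReB nonneg_form_def by simp
    ultimately have "(norm (x - ?B x))\<^sup>2 \<le> (norm x)\<^sup>2"
      using norm_add_sq_cinner[of x "- ?B x"]
      by (simp add: cinner_minus_right cinner_commute[of x "?B x"] del: scaleR_scaleR)
    then show ?thesis by (rule power2_le_imp_le) simp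
  qed
qed

text \<open>With \<open>C = I - A/c\<close> and \<open>Y = lim Y\<^sub>n\<close> the fixpoint equation \<open>Y = (C + Y\<^sup>2)/2\<close> gives
  \<open>(I - Y)\<^sup>2 = I - C = A/c\<close>, so \<open>\<surd>c (I - Y)\<close> is a square root of A.\<close>

lemma positive_sqrt_exists:
  fixes A :: "'a::chilbert_space \<Rightarrow> 'a"
  assumes A: "positive_op A"
  obtains Q where "positive_op Q" "\<And>x. Q (Q x) = A x"
    "\<And>W x. bounded_op W \<Longrightarrow> (\<And>x. W (A x) = A (W x)) \<Longrightarrow> W (Q x) = Q (W x)"
proof -
  obtain c where c: "c > 0" "\<And>x. norm (A x) \<le> c * norm x"
    using A bounded_op_bound unfolding positive_op_def by blast
  define C where "C = (\<lambda>x. x - scaleR (1/c) (A x))"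
  interpret sqrt_iteration C unfolding C_def by (rule sqrt_iteration_shifted[OF A c])
  define Q where "Q = (\<lambda>x. scaleR (sqrt c) (x - Ylim x))"
  have "scaleR r (scaleC d y) = scaleC d (scaleR r y)" for r d and y :: 'a
    by (simp add: scaleR_scaleC scaleC_scaleC mult.commute)
  then have LQ: "clinear_op Q"
    unfolding Q_def clinear_op_def
    by (simp add: clinear_op_add[OF clinear_Ylim] clinear_op_scaleC[OF clinear_Ylim] scaleC_diff_right
        algebra_simps)
  have "norm (Q x) \<le> (2 * sqrt c) * norm x" for x
    using norm_triangle_ineq4[of x "Ylim x"] Ylim_contraction[of x] c
    unfolding Q_def by (simp add: mult_left_mono)
  moreover have "nonneg_form Q"
    using hermitian_op_Im_form[OF hermitian_Ylim] Re_form_Ylim_le c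
    unfolding Q_def nonneg_form_def by (simp add: cinner_scaleR_left cinner_diff_left cinner_self_Re cinner_self_Im)
  ultimately have "positive_op Q"
    using LQ unfolding positive_op_def bounded_op_def nonneg_form_def by blast
  moreover have "Q (Q x) = A x" for x
  proof -
    have "(x - Ylim x) - Ylim (x - Ylim x) = scaleR (1/c) (A x)"
      using Ylim_complement_square by (simp add: C_def[THEN fun_cong])
    moreover have "Q (Q x) = scaleR c ((x - Ylim x) - Ylim (x - Ylim x))"
      unfolding Q_def using c
      by (simp add: clinear_op_diff[OF clinear_Ylim] clinear_op_scaleR[OF clinear_Ylim] scaleR_diff_right)
    ultimately show ?thesis using c by simp
  qed
  moreover have "W (Q x) = Q (W x)" if W: "bounded_op W" and WA: "\<And>x. W (A x) = A (W x)" for W x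
  proof -
    have LW: "clinear_op W" by (rule bounded_op_clinear[OF W])
    have "W (C z) = C (W z)" for z
      unfolding C_def[THEN fun_cong] by (simp add: clinear_op_diff[OF LW] clinear_op_scaleR[OF LW] WA)
    from Ylim_commute[OF W this] show ?thesis
      unfolding Q_def by (simp add: clinear_op_diff[OF LW] clinear_op_scaleR[OF LW])
  qed
  ultimately show ?thesis using that by blast
qed

lemma positive_sqrt_unique:
  fixes Q Q' :: "'a::chilbert_space \<Rightarrow> 'a"
  assumes Q: "positive_op Q" and Q': "positive_op Q'"
    and same_square: "\<And>x. Q (Q x) = Q' (Q' x)" and commute: "\<And>x. Q' (Q x) = Q (Q' x)"
  shows "Q = Q'"
proof
  fix x
  have LQ: "clinear_op Q" and LQ': "clinear_op Q'"
    using Q Q' positive_op_clinear by blast+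
  have HQ: "hermitian_op Q" and HQ': "hermitian_op Q'"
    using Q Q' positive_op_hermitian by blast+
  have PQ: "nonneg_form Q" and PQ': "nonneg_form Q'"
    using Q Q' positive_op_nonneg_form by blast+
  obtain c where c: "c > 0" "\<And>x. norm (Q x) \<le> c * norm x"
    using Q bounded_op_bound unfolding positive_op_def by blast
  obtain c' where c': "c' > 0" "\<And>x. norm (Q' x) \<le> c' * norm x"
    using Q' bounded_op_bound unfolding positive_op_def by blast
  \<comment> \<open>\<open>(Q + Q') y = Q\<^sup>2 x - Q'\<^sup>2 x = 0\<close> for \<open>y = Q x - Q' x\<close>, so both forms vanish at y\<close>
  define y where "y = Q x - Q' x"
  have "Q y + Q' y = 0"
    unfolding y_def using commute[of x] same_square[of x]
    by (simp add: clinear_op_diff[OF LQ] clinear_op_diff[OF LQ'])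
  then have "Re (cinner (Q y) y) + Re (cinner (Q' y) y) = 0"
    by (metis cinner_add_left cinner_zero_left plus_complex.sel(1) zero_complex.sel(1))
  moreover have "Re (cinner (Q y) y) \<ge> 0" "Re (cinner (Q' y) y) \<ge> 0"
    using PQ PQ' unfolding nonneg_form_def by auto
  ultimately have "Re (cinner (Q y) y) = 0" "Re (cinner (Q' y) y) = 0" by linarith+
  then have "Q y = 0" "Q' y = 0"
    using nonneg_form_norm_sq_le[OF LQ HQ PQ c(2) c(1), of y]
      nonneg_form_norm_sq_le[OF LQ' HQ' PQ' c'(2) c'(1), of y] by simp_all
  moreover have "cinner y y = cinner (Q y - Q' y) x"
    unfolding y_def using HQ HQ' unfolding hermitian_op_def by (simp add: cinner_diff_left cinner_diff_right)
  ultimately show "Q x = Q' x" by (simp add: cinner_self_eq_0_iff y_def)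
qed

lemma
  fixes A :: "'a::chilbert_space \<Rightarrow> 'a"
  assumes A: "positive_op A"
  shows positive_op_sqrt: "positive_op (op_sqrt A)"
    and op_sqrt_square: "op_sqrt A (op_sqrt A x) = A x"
proof -
  obtain Q where Q: "positive_op Q" "\<And>x. Q (Q x) = A x"
    and comm: "\<And>W x. bounded_op W \<Longrightarrow> (\<And>x. W (A x) = A (W x)) \<Longrightarrow> W (Q x) = Q (W x)"
    using positive_sqrt_exists[OF A] by blast
  have "op_sqrt A = Q" unfolding op_sqrt_def
  proof (rule the_equality)
    show "positive_op Q \<and> Q \<circ> Q = A" using Q by auto
  next
    fix R assume R: "positive_op R \<and> R \<circ> R = A"
    then have PR: "positive_op R" and RR: "\<And>x. R (R x) = A x" by (auto simp: fun_eq_iff)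
    have RA: "R (A x) = A (R x)" for x by (simp only: RR[symmetric])
    have "R (Q x) = Q (R x)" for x
      using PR unfolding positive_op_def by (intro comm RA) blast
    then show "R = Q"
      by (intro positive_sqrt_unique[OF PR Q(1)]) (simp_all add: RR Q(2))
  qed
  then show "positive_op (op_sqrt A)" "op_sqrt A (op_sqrt A x) = A x" using Q by auto
qed

lemma norm_op_sqrt_sq:
  fixes A :: "'a::chilbert_space \<Rightarrow> 'a"
  assumes A: "positive_op A"
  shows "(norm (op_sqrt A x))\<^sup>2 = Re (cinner (A x) x)"
proof -
  have "cinner (A x) x = cinner (op_sqrt A (op_sqrt A x)) x" by (simp only: op_sqrt_square[OF A])
  also have "\<dots> = cinner (op_sqrt A x) (op_sqrt A x)"
    using positive_op_hermitian[OF positive_op_sqrt[OF A]] unfolding hermitian_op_def by blast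
  finally show ?thesis by (simp add: cinner_self_Re)
qed

section \<open>Quotient operators and controlled fusion frames\<close>

lemma quotient_op_bounded_iff_lower_bound:
  fixes G :: "'a::complex_inner \<Rightarrow> 'b::complex_inner" and P :: "'a \<Rightarrow> 'c::complex_inner"
  assumes LG: "clinear_op G" and LP: "clinear_op P"
  shows "quotient_op_bounded G P \<longleftrightarrow> (\<exists>A>0. \<forall>f. A * (norm (G f))\<^sup>2 \<le> (norm (P f))\<^sup>2)"
proof
  assume "quotient_op_bounded G P"
  then obtain C where C: "C > 0" "\<And>f. norm (G f) \<le> C * norm (P f)"
    unfolding quotient_op_bounded_def by blast
  have "(1 / C\<^sup>2) * (norm (G f))\<^sup>2 \<le> (norm (P f))\<^sup>2" for f
    using power_mono[OF C(2)[of f] norm_ge_zero] C(1) by (simp add: field_simps power_mult_distrib)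
  with C(1) show "\<exists>A>0. \<forall>f. A * (norm (G f))\<^sup>2 \<le> (norm (P f))\<^sup>2"
    by (intro exI[of _ "1 / C\<^sup>2"]) simp
next
  assume "\<exists>A>0. \<forall>f. A * (norm (G f))\<^sup>2 \<le> (norm (P f))\<^sup>2"
  then obtain A where A: "A > 0" "\<And>f. A * (norm (G f))\<^sup>2 \<le> (norm (P f))\<^sup>2" by blast
  have bound: "norm (G f) \<le> sqrt (1 / A) * norm (P f)" for f
  proof -
    have "(norm (G f))\<^sup>2 \<le> (1 / A) * (norm (P f))\<^sup>2" using A by (simp add: field_simps)
    then have "sqrt ((norm (G f))\<^sup>2) \<le> sqrt ((1 / A) * (norm (P f))\<^sup>2)" by (rule real_sqrt_le_mono)
    also have "\<dots> = sqrt (1 / A) * norm (P f)" by (simp only: real_sqrt_mult real_sqrt_abs abs_norm_cancel)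
    finally show ?thesis by simp
  qed
  \<comment> \<open>well defined: \<open>P f = P g\<close> forces \<open>G (f - g) = 0\<close>\<close>
  have "G f = G g" if "P f = P g" for f g
    using bound[of "f - g"] that by (simp add: clinear_op_diff[OF LP] clinear_op_diff[OF LG])
  moreover have "sqrt (1 / A) > 0" using A(1) by simp
  ultimately show "quotient_op_bounded G P" unfolding quotient_op_bounded_def using bound by blast
qed

lemma quotient_op_bounded_cong_norm:
  fixes G :: "'a::complex_inner \<Rightarrow> 'b::complex_inner"
    and P :: "'a \<Rightarrow> 'c::complex_inner" and P' :: "'a \<Rightarrow> 'd::complex_inner"
  assumes "clinear_op G" "clinear_op P" "clinear_op P'" and "\<And>f. norm (P f) = norm (P' f)"
  shows "quotient_op_bounded G P \<longleftrightarrow> quotient_op_bounded G P'"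
  using quotient_op_bounded_iff_lower_bound[OF assms(1,2)] quotient_op_bounded_iff_lower_bound[OF assms(1,3)]
    assms(4) by simp

lemma closed_csubspace_image:
  fixes V :: "'a::chilbert_space \<Rightarrow> 'a"
  assumes V: "invertible_op V" and F: "closed_csubspace F"
  shows "closed_csubspace (V ` F)"
proof -
  have LV: "clinear_op V" and "bij V" and Vinv: "bounded_op (inv V)"
    using V unfolding invertible_op_def bounded_op_def by auto
  then have "V ` F = inv V -` F" by (simp add: bij_vimage_eq_inv_image bij_imp_bij_inv inv_inv_eq)
  then have "closed (V ` F)"
    using F continuous_closed_vimage linear_continuous_at[OF bounded_op_bounded_linear[OF Vinv]]
    unfolding closed_csubspace_def by metis
  moreover have "0 \<in> V ` F"
    using F clinear_op_zero[OF LV] unfolding closed_csubspace_def by (metis image_eqI)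
  moreover have "\<forall>x\<in>V ` F. \<forall>y\<in>V ` F. x + y \<in> V ` F"
    using F clinear_op_add[OF LV] unfolding closed_csubspace_def
    by (auto intro!: image_eqI[where x = "_ + _"])
  moreover have "\<forall>a. \<forall>x\<in>V ` F. scaleC a x \<in> V ` F"
    using F clinear_op_scaleC[OF LV] unfolding closed_csubspace_def
    by (auto intro!: image_eqI[where x = "scaleC _ _"])
  ultimately show ?thesis unfolding closed_csubspace_def by blast
qed

lemma proj_adj_proj_image:
  fixes V :: "'a::chilbert_space \<Rightarrow> 'a"
  assumes V: "invertible_op V" and F: "closed_csubspace F"
  shows "proj F (adj V (proj (V ` F) z)) = proj F (adj V z)"
proof (rule proj_eqI[OF F proj_in[OF F]])
  fix m assume m: "m \<in> F"
  have BV: "bounded_op V" using V unfolding invertible_op_def by auto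
  have VF: "closed_csubspace (V ` F)" by (rule closed_csubspace_image[OF V F])
  \<comment> \<open>\<open>V\<^sup>*\<close> maps the orthogonal complement of \<open>V F\<close> into that of F\<close>
  have "cinner (adj V (z - proj (V ` F) z)) m = 0"
    using cinner_proj_orthogonal[OF VF, of "V m" z] m
    by (simp add: cinner_adj_left[OF BV])
  then show "cinner (adj V (proj (V ` F) z) - proj F (adj V z)) m = 0"
    using cinner_proj_orthogonal[OF F m, of "adj V z"]
    by (simp add: clinear_op_diff[OF bounded_op_clinear[OF bounded_op_adj[OF BV]]] cinner_diff_left)
qed

lemma cgf_integrand_image:
  fixes V :: "'a::chilbert_space \<Rightarrow> 'a"
  assumes V: "invertible_op V" and F: "closed_csubspace (F x)"
    and VT: "adj V \<circ> T = T \<circ> adj V" and VU: "adj V \<circ> U = U \<circ> adj V"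
  shows "cgf_integrand v (\<lambda>x. V ` F x) (\<lambda>x. \<Lambda> x \<circ> proj (F x) \<circ> adj V) T U f x
       = cgf_integrand v F \<Lambda> T U (adj V f) x"
  using proj_adj_proj_image[OF V F] fun_cong[OF VT, of f] fun_cong[OF VU, of f]
  unfolding cgf_integrand_def by simp

lemma is_ctrl_frame_operator_form:
  fixes T :: "'a::chilbert_space \<Rightarrow> 'a" and \<Lambda> :: "'x \<Rightarrow> 'a \<Rightarrow> 'k::complex_inner"
  assumes S: "is_ctrl_frame_operator M v F \<Lambda> T U S"
    and F_closed: "\<And>x. x \<in> space M \<Longrightarrow> closed_csubspace (F x)"
    and \<Lambda>_bounded: "\<And>x. x \<in> space M \<Longrightarrow> bounded_op (\<Lambda> x)"
    and T: "bounded_op T"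
  shows "cinner (S g) g = integral\<^sup>L M (cgf_integrand v F \<Lambda> T U g)"
proof -
  have "cinner (S g) g = (LINT x|M. complex_of_real ((v x)\<^sup>2) *
      cinner (adj T (proj (F x) (adj (\<Lambda> x) (\<Lambda> x (proj (F x) (U g)))))) g)"
    using S unfolding is_ctrl_frame_operator_def by blast
  also have "\<dots> = integral\<^sup>L M (cgf_integrand v F \<Lambda> T U g)"
  proof (rule Bochner_Integration.integral_cong[OF refl])
    fix x assume x: "x \<in> space M"
    show "complex_of_real ((v x)\<^sup>2) * cinner (adj T (proj (F x) (adj (\<Lambda> x) (\<Lambda> x (proj (F x) (U g)))))) g
        = cgf_integrand v F \<Lambda> T U g x"
      unfolding cgf_integrand_def
      by (simp add: cinner_adj_left[OF T] cinner_proj_left[OF F_closed[OF x]]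
          cinner_adj_left[OF \<Lambda>_bounded[OF x]])
  qed
  finally show ?thesis .
qed

lemma ctrl_L_gfusion_frame_precomp_iff:
  assumes frame: "ctrl_L_gfusion_frame M v F \<Lambda> T U K"
    and W: "bounded_op W"
    and integrand: "\<And>f x. x \<in> space M \<Longrightarrow> cgf_integrand v F' \<Lambda>' T U f x = cgf_integrand v F \<Lambda> T U (W f) x"
  shows "ctrl_L_gfusion_frame M v F' \<Lambda>' T U L \<longleftrightarrow>
    (\<exists>A>0. \<forall>f. A * (norm (adj L f))\<^sup>2 \<le> Re (integral\<^sup>L M (cgf_integrand v F \<Lambda> T U (W f))))"
    (is "_ \<longleftrightarrow> (\<exists>A>0. \<forall>f. A * _ \<le> ?I f)")
proof -
  let ?orig = "cgf_integrand v F \<Lambda> T U"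
  have integrable: "integrable M (cgf_integrand v F' \<Lambda>' T U f) \<longleftrightarrow> integrable M (?orig (W f))" for f
    using integrand by (intro Bochner_Integration.integrable_cong) auto
  have integral: "integral\<^sup>L M (cgf_integrand v F' \<Lambda>' T U f) = integral\<^sup>L M (?orig (W f))" for f
    using integrand by (intro Bochner_Integration.integral_cong) auto
  obtain A B where AB: "0 < A" "A \<le> B"
    and fr: "\<And>g. integrable M (?orig g) \<and> Im (integral\<^sup>L M (?orig g)) = 0 \<and>
       Re (integral\<^sup>L M (?orig g)) \<le> B * (norm g)\<^sup>2"
    using frame unfolding ctrl_L_gfusion_frame_def by blast
  obtain c where c: "\<And>f. norm (W f) \<le> c * norm f" using W unfolding bounded_op_def by blast
  have upper: "?I f \<le> max A' (B * c\<^sup>2) * (norm f)\<^sup>2" for A' f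
  proof -
    have "?I f \<le> B * (norm (W f))\<^sup>2" using fr by blast
    also have "\<dots> \<le> B * (c * norm f)\<^sup>2"
      using c AB by (intro mult_left_mono power_mono) auto
    also have "\<dots> = (B * c\<^sup>2) * (norm f)\<^sup>2" by (simp add: power_mult_distrib)
    also have "\<dots> \<le> max A' (B * c\<^sup>2) * (norm f)\<^sup>2" by (intro mult_right_mono) auto
    finally show ?thesis .
  qed
  show ?thesis
    unfolding ctrl_L_gfusion_frame_def integrable integral
  proof
    assume "\<exists>A' B'. 0 < A' \<and> A' \<le> B' \<and> (\<forall>f. integrable M (?orig (W f)) \<and> Im (integral\<^sup>L M (?orig (W f))) = 0
        \<and> A' * (norm (adj L f))\<^sup>2 \<le> ?I f \<and> ?I f \<le> B' * (norm f)\<^sup>2)"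
    then show "\<exists>A>0. \<forall>f. A * (norm (adj L f))\<^sup>2 \<le> ?I f" by blast
  next
    assume "\<exists>A>0. \<forall>f. A * (norm (adj L f))\<^sup>2 \<le> ?I f"
    then obtain A' where "A' > 0" "\<And>f. A' * (norm (adj L f))\<^sup>2 \<le> ?I f" by blast
    with fr upper show "\<exists>A' B'. 0 < A' \<and> A' \<le> B' \<and> (\<forall>f. integrable M (?orig (W f))
        \<and> Im (integral\<^sup>L M (?orig (W f))) = 0 \<and> A' * (norm (adj L f))\<^sup>2 \<le> ?I f \<and> ?I f \<le> B' * (norm f)\<^sup>2)"
      by (intro exI[of _ A'] exI[of _ "max A' (B * c\<^sup>2)"]) simp
  qed
qed

lemma positive_op_congruence:
  fixes V S :: "'a::chilbert_space \<Rightarrow> 'a"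
  assumes S: "positive_op S" and V: "bounded_op V"
  shows "positive_op (V \<circ> S \<circ> adj V)"
  using S bounded_op_comp[OF bounded_op_comp[OF V] bounded_op_adj[OF V]]
  unfolding positive_op_def by (simp add: cinner_adj[OF V])

lemma norm_op_sqrt_congruence:
  fixes V S :: "'a::chilbert_space \<Rightarrow> 'a"
  assumes S: "positive_op S" and V: "bounded_op V"
  shows "norm (op_sqrt (V \<circ> S \<circ> adj V) f) = norm (op_sqrt S (adj V f))"
proof -
  have "(norm (op_sqrt (V \<circ> S \<circ> adj V) f))\<^sup>2 = (norm (op_sqrt S (adj V f)))\<^sup>2"
    by (simp add: norm_op_sqrt_sq[OF positive_op_congruence[OF S V]] norm_op_sqrt_sq[OF S] cinner_adj[OF V])
  then show ?thesis by (simp add: power2_eq_iff_nonneg)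
qed

theorem theorem3p13:
  fixes M :: "'x measure"
    and v :: "'x \<Rightarrow> real"
    and F :: "'x \<Rightarrow> 'a::chilbert_space set"
    and \<Lambda> :: "'x \<Rightarrow> 'a \<Rightarrow> 'k::chilbert_space"
    and T U K V S :: "'a \<Rightarrow> 'a"
  assumes separable: "\<exists>D::'a set. countable D \<and> closure D = UNIV"
    and v_meas: "v \<in> borel_measurable M"
    and v_pos: "\<And>x. x \<in> space M \<Longrightarrow> v x > 0"
    and F_closed: "\<And>x. x \<in> space M \<Longrightarrow> closed_csubspace (F x)"
    and F_weak_meas: "\<And>f g. (\<lambda>x. cinner (proj (F x) f) g) \<in> borel_measurable M"
    and \<Lambda>_bounded: "\<And>x. x \<in> space M \<Longrightarrow> bounded_op (\<Lambda> x)"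
    and T: "pos_invertible_op T"
    and U: "pos_invertible_op U"
    and K: "bounded_op K"
    and frame: "ctrl_L_gfusion_frame M v F \<Lambda> T U K"
    and S: "is_ctrl_frame_operator M v F \<Lambda> T U S"
    and S_pos: "positive_op S"
    and V: "invertible_op V"
    and VT: "adj V \<circ> T = T \<circ> adj V"
    and VU: "adj V \<circ> U = U \<circ> adj V"
  shows "(ctrl_L_gfusion_frame M v (\<lambda>x. V ` F x) (\<lambda>x. \<Lambda> x \<circ> proj (F x) \<circ> adj V) T U (V \<circ> K)
           \<longleftrightarrow> quotient_op_bounded (adj (V \<circ> K)) (op_sqrt S \<circ> adj V))
       \<and> (quotient_op_bounded (adj (V \<circ> K)) (op_sqrt S \<circ> adj V)
           \<longleftrightarrow> quotient_op_bounded (adj (V \<circ> K)) (op_sqrt (V \<circ> S \<circ> adj V)))"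
proof -
  have BV: "bounded_op V" using V unfolding invertible_op_def by blast
  have BT: "bounded_op T" using T unfolding pos_invertible_op_def positive_op_def by blast
  have LG: "clinear_op (adj (V \<circ> K))"
    by (intro bounded_op_clinear bounded_op_adj bounded_op_comp BV K)
  have LP: "clinear_op (op_sqrt S \<circ> adj V)"
    by (intro clinear_op_comp positive_op_clinear positive_op_sqrt S_pos bounded_op_clinear bounded_op_adj BV)
  have LP': "clinear_op (op_sqrt (V \<circ> S \<circ> adj V))"
    by (intro positive_op_clinear positive_op_sqrt positive_op_congruence S_pos BV)
  have form: "Re (integral\<^sup>L M (cgf_integrand v F \<Lambda> T U g)) = (norm (op_sqrt S g))\<^sup>2" for g
    using is_ctrl_frame_operator_form[OF S F_closed \<Lambda>_bounded BT] norm_op_sqrt_sq[OF S_pos] by simp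
  have "ctrl_L_gfusion_frame M v (\<lambda>x. V ` F x) (\<lambda>x. \<Lambda> x \<circ> proj (F x) \<circ> adj V) T U (V \<circ> K)
      \<longleftrightarrow> (\<exists>A>0. \<forall>f. A * (norm (adj (V \<circ> K) f))\<^sup>2 \<le> (norm ((op_sqrt S \<circ> adj V) f))\<^sup>2)"
    using ctrl_L_gfusion_frame_precomp_iff[OF frame bounded_op_adj[OF BV]
        cgf_integrand_image[of V F, OF V F_closed VT VU]]
    by (simp add: form)
  also have "\<dots> \<longleftrightarrow> quotient_op_bounded (adj (V \<circ> K)) (op_sqrt S \<circ> adj V)"
    by (rule quotient_op_bounded_iff_lower_bound[OF LG LP, symmetric])
  moreover have "quotient_op_bounded (adj (V \<circ> K)) (op_sqrt S \<circ> adj V)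
      \<longleftrightarrow> quotient_op_bounded (adj (V \<circ> K)) (op_sqrt (V \<circ> S \<circ> adj V))"
    by (rule quotient_op_bounded_cong_norm[OF LG LP LP']) (simp add: norm_op_sqrt_congruence[OF S_pos BV])
  ultimately show ?thesis by blast
qed

end
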